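(* Let $K$ be a field with $\operatorname{char}(K)\neq2$. There is a functor $\mathcal{C}\colon\mathbf{BX}(\mathbf{LeibAlg}_K)\to\mathbf{BICat}(\mathbf{LeibAlg}_K)$ which sends a braided crossed module $\mathcal{X}=(M,N,(\cdot_1,\cdot_2),\partial,(\{-,-\},\langle-,-\rangle))$ to $\mathcal{C}_{\mathcal{X}}=(M\rtimes N,N,\bar s,\bar t,\bar e,\bar k,(\bar\tau,\bar\psi))$ with $\bar s(m,n)=n$, $\bar t(m,n)=\partial m+n$, $\bar e(n)=(0,n)$, $\bar k((m,n),(m',\partial m+n))=(m+m',n)$, $\bar\tau_{n,n'}=(-2\{n,n'\},[n,n'])$, $\bar\psi_{n,n'}=(-2\langle n,n'\rangle,[n,n'])$, and sends a homomorphism of braided crossed modules $(f_1,f_2)\colon\mathcal{X}\to\mathcal{X}'$ to $(f_1\times f_2,f_2)\colon\mathcal{C}_{\mathcal{X}}\to\mathcal{C}_{\mathcal{X}'}$, which is a braided internal functor.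
   Context: A Leibniz $K$-algebra: bilinear bracket with $[x,[y,z]]=[[x,y],z]-[[x,z],y]$. Leibniz action of $N$ on $M$: bilinear $\cdot_1\colon N\times M\to M$, $\cdot_2\colon M\times N\to M$ with $n\cdot_1[m,m']=[n\cdot_1m,m']-[n\cdot_1m',m]$; $[m,n\cdot_1m']=[m\cdot_2n,m']-[m,m']\cdot_2n$; $[m,m'\cdot_2n]=[m,m']\cdot_2n-[m\cdot_2n,m']$; $m\cdot_2[n,n']=(m\cdot_2n)\cdot_2n'-(m\cdot_2n')\cdot_2n$; $n\cdot_1(m\cdot_2n')=(n\cdot_1m)\cdot_2n'-[n,n']\cdot_1m$; $n\cdot_1(n'\cdot_1m)=[n,n']\cdot_1m-(n\cdot_1m)\cdot_2n'$. Semidirect product $M\rtimes N$: $M\times N$ with $[(m,n),(m',n')]=([m,m']+n\cdot_1m'+m\cdot_2n',[n,n'])$. Crossed module $(M,N,(\cdot_1,\cdot_2),\partial)$: action plus Leibniz homomorphism $\partial$ with $\partial(n\cdot_1m)=[n,\partial m]$, $\partial(m\cdot_2n)=[\partial m,n]$, $\partial(m)\cdot_1m'=[m,m']=m\cdot_2\partial(m')$. Braiding: bilinear $\{-,-\},\langle-,-\rangle\colon N\times N\to M$ with $\partial\{n,n'\}=[n,n']=\partial\langle n,n'\rangle$; $\{\partial m,\partial m'\}=[m,m']=\langle\partial m,\partial m'\rangle$; $\{\partial m,n\}=m\cdot_2n=\langle\partial m,n\rangle$; $\{n,\partial m\}=n\cdot_1m=\langle n,\partial m\rangle$; $\{n,[n',n'']\}=\{[n,n'],n''\}-\{[n,n''],n'\}$;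 $\langle n,[n',n'']\rangle=\{[n,n'],n''\}-\langle[n,n''],n'\rangle$; $\{n,[n',n'']\}=\{[n,n'],n''\}-\langle[n,n''],n'\rangle$; $\langle n,[n',n'']\rangle=\langle[n,n'],n''\rangle-\langle[n,n''],n'\rangle$. Homomorphism of braided crossed modules $(f_1,f_2)$: Leibniz homomorphisms $f_1\colon M\to M'$, $f_2\colon N\to N'$ with $f_1(n\cdot_1m)=f_2(n)*_1f_1(m)$, $f_1(m\cdot_2n)=f_1(m)*_2f_2(n)$, $\partial'f_1=f_2\partial$, $f_1\{n,n'\}=\{f_2n,f_2n'\}'$, $f_1\langle n,n'\rangle=\langle f_2n,f_2n'\rangle'$. These form $\mathbf{BX}(\mathbf{LeibAlg}_K)$. Categorical Leibniz algebra $(C_1,C_0,s,t,e,k)$: Leibniz homomorphisms $s,t\colon C_1\to C_0$, $e\colon C_0\to C_1$, $k\colon \{(x,y):t(x)=s(y)\}\to C_1$ forming an internal category ($se=te=\mathrm{Id}$, $sk(x,y)=s(x)$, $tk(x,y)=t(y)$, $k(es(x),x)=x=k(x,et(x))$, $k$ associative). Braiding: bilinear $\tau,\psi\colon C_0\times C_0\to C_1$ with $s(\tau_{a,b})=s(\psi_{a,b})=[a,b]$, $t(\tau_{a,b})=t(\psi_{a,b})=-[a,b]$; $k([x,y],\tau_{t x,t y})=k(\tau_{s x,s y},-[x,y])$ and likewise for $\psi$; $\tau_{a,[b,c]}=\tau_{[a,b],c}-\tau_{[a,c],b}$; $\psi_{a,[b,c]}=\tau_{[a,b],c}-\psi_{[a,c],b}$;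 $\tau_{a,[b,c]}=\tau_{[a,b],c}-\psi_{[a,c],b}$; $\psi_{a,[b,c]}=\psi_{[a,b],c}-\psi_{[a,c],b}$. Braided internal functor $(F_1,F_0)$: Leibniz homomorphisms commuting with $s,t,e,k$, with $F_1(\tau_{a,b})=\tau'_{F_0a,F_0b}$, $F_1(\psi_{a,b})=\psi'_{F_0a,F_0b}$. These form $\mathbf{BICat}(\mathbf{LeibAlg}_K)$. *)

theory Defs
  imports Complex_Main "HOL-Library.Product_Plus"
begin

(* K is a type 'k::field; a K-vector space is a type of class ab_group_add
   together with a scalar multiplication satisfying the vector_space axioms. *)

definition bilinear_map ::
  "('k::field \<Rightarrow> 'a::ab_group_add \<Rightarrow> 'a) \<Rightarrow> ('k \<Rightarrow> 'b::ab_group_add \<Rightarrow> 'b)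
   \<Rightarrow> ('k \<Rightarrow> 'c::ab_group_add \<Rightarrow> 'c) \<Rightarrow> ('a \<Rightarrow> 'b \<Rightarrow> 'c) \<Rightarrow> bool" where
  "bilinear_map sa sb sc f \<longleftrightarrow>
     (\<forall>y. Vector_Spaces.linear sa sc (\<lambda>x. f x y)) \<and> (\<forall>x. Vector_Spaces.linear sb sc (f x))"

definition leibniz_alg :: "('k::field \<Rightarrow> 'a::ab_group_add \<Rightarrow> 'a) \<Rightarrow> ('a \<Rightarrow> 'a \<Rightarrow> 'a) \<Rightarrow> bool" where
  "leibniz_alg sc br \<longleftrightarrow> vector_space sc \<and> bilinear_map sc sc sc br \<and>
     (\<forall>x y z. br x (br y z) = br (br x y) z - br (br x z) y)"

definition leibniz_hom ::
  "('k::field \<Rightarrow> 'a::ab_group_add \<Rightarrow> 'a) \<Rightarrow> ('a \<Rightarrow> 'a \<Rightarrow> 'a)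
   \<Rightarrow> ('k \<Rightarrow> 'b::ab_group_add \<Rightarrow> 'b) \<Rightarrow> ('b \<Rightarrow> 'b \<Rightarrow> 'b) \<Rightarrow> ('a \<Rightarrow> 'b) \<Rightarrow> bool" where
  "leibniz_hom sa bra sb brb f \<longleftrightarrow> leibniz_alg sa bra \<and> leibniz_alg sb brb \<and>
     Vector_Spaces.linear sa sb f \<and> (\<forall>x y. f (bra x y) = brb (f x) (f y))"

record ('k, 'm, 'n) bxm =
  scM :: "'k \<Rightarrow> 'm \<Rightarrow> 'm"
  brM :: "'m \<Rightarrow> 'm \<Rightarrow> 'm"
  scN :: "'k \<Rightarrow> 'n \<Rightarrow> 'n"
  brN :: "'n \<Rightarrow> 'n \<Rightarrow> 'n"
  act1 :: "'n \<Rightarrow> 'm \<Rightarrow> 'm"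
  act2 :: "'m \<Rightarrow> 'n \<Rightarrow> 'm"
  bd :: "'m \<Rightarrow> 'n"
  curly :: "'n \<Rightarrow> 'n \<Rightarrow> 'm"
  angle :: "'n \<Rightarrow> 'n \<Rightarrow> 'm"

definition leib_action :: "('k::field, 'm::ab_group_add, 'n::ab_group_add, 'z) bxm_scheme \<Rightarrow> bool" where
  "leib_action X \<longleftrightarrow>
     leibniz_alg (scM X) (brM X) \<and> leibniz_alg (scN X) (brN X) \<and>
     bilinear_map (scN X) (scM X) (scM X) (act1 X) \<and>
     bilinear_map (scM X) (scN X) (scM X) (act2 X) \<and>
     (\<forall>n m m'. act1 X n (brM X m m') = brM X (act1 X n m) m' - brM X (act1 X n m') m) \<and>
     (\<forall>m n m'. brM X m (act1 X n m') = brM X (act2 X m n) m' - act2 X (brM X m m') n) \<and>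
     (\<forall>m m' n. brM X m (act2 X m' n) = act2 X (brM X m m') n - brM X (act2 X m n) m') \<and>
     (\<forall>m n n'. act2 X m (brN X n n') = act2 X (act2 X m n) n' - act2 X (act2 X m n') n) \<and>
     (\<forall>n m n'. act1 X n (act2 X m n') = act2 X (act1 X n m) n' - act1 X (brN X n n') m) \<and>
     (\<forall>n n' m. act1 X n (act1 X n' m) = act1 X (brN X n n') m - act2 X (act1 X n m) n')"

definition crossed_module :: "('k::field, 'm::ab_group_add, 'n::ab_group_add, 'z) bxm_scheme \<Rightarrow> bool" where
  "crossed_module X \<longleftrightarrow> leib_action X \<and>
     leibniz_hom (scM X) (brM X) (scN X) (brN X) (bd X) \<and>
     (\<forall>n m. bd X (act1 X n m) = brN X n (bd X m)) \<and>
     (\<forall>m n. bd X (act2 X m n) = brN X (bd X m) n) \<and>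
     (\<forall>m m'. act1 X (bd X m) m' = brM X m m' \<and> brM X m m' = act2 X m (bd X m'))"

definition braided_xmod :: "('k::field, 'm::ab_group_add, 'n::ab_group_add, 'z) bxm_scheme \<Rightarrow> bool" where
  "braided_xmod X \<longleftrightarrow> crossed_module X \<and>
     bilinear_map (scN X) (scN X) (scM X) (curly X) \<and>
     bilinear_map (scN X) (scN X) (scM X) (angle X) \<and>
     (\<forall>n n'. bd X (curly X n n') = brN X n n' \<and> brN X n n' = bd X (angle X n n')) \<and>
     (\<forall>m m'. curly X (bd X m) (bd X m') = brM X m m' \<and> brM X m m' = angle X (bd X m) (bd X m')) \<and>
     (\<forall>m n. curly X (bd X m) n = act2 X m n \<and> act2 X m n = angle X (bd X m) n) \<and>
     (\<forall>n m. curly X n (bd X m) = act1 X n m \<and> act1 X n m = angle X n (bd X m)) \<and>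
     (\<forall>n n' n''. curly X n (brN X n' n'') = curly X (brN X n n') n'' - curly X (brN X n n'') n') \<and>
     (\<forall>n n' n''. angle X n (brN X n' n'') = curly X (brN X n n') n'' - angle X (brN X n n'') n') \<and>
     (\<forall>n n' n''. curly X n (brN X n' n'') = curly X (brN X n n') n'' - angle X (brN X n n'') n') \<and>
     (\<forall>n n' n''. angle X n (brN X n' n'') = angle X (brN X n n') n'' - angle X (brN X n n'') n')"

definition bxm_hom ::
  "('k::field, 'm::ab_group_add, 'n::ab_group_add, 'z) bxm_scheme
   \<Rightarrow> ('k, 'm2::ab_group_add, 'n2::ab_group_add, 'z2) bxm_scheme
   \<Rightarrow> ('m \<Rightarrow> 'm2) \<Rightarrow> ('n \<Rightarrow> 'n2) \<Rightarrow> bool" where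
  "bxm_hom X X' f1 f2 \<longleftrightarrow> braided_xmod X \<and> braided_xmod X' \<and>
     leibniz_hom (scM X) (brM X) (scM X') (brM X') f1 \<and>
     leibniz_hom (scN X) (brN X) (scN X') (brN X') f2 \<and>
     (\<forall>n m. f1 (act1 X n m) = act1 X' (f2 n) (f1 m)) \<and>
     (\<forall>m n. f1 (act2 X m n) = act2 X' (f1 m) (f2 n)) \<and>
     (\<forall>m. bd X' (f1 m) = f2 (bd X m)) \<and>
     (\<forall>n n'. f1 (curly X n n') = curly X' (f2 n) (f2 n')) \<and>
     (\<forall>n n'. f1 (angle X n n') = angle X' (f2 n) (f2 n'))"

(* Categorical Leibniz algebra data.  The composition cmp is a total function,
   but all its axioms are only imposed on composable pairs (t x = s y). *)
record ('k, 'c1, 'c0) bicat =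
  sc1 :: "'k \<Rightarrow> 'c1 \<Rightarrow> 'c1"
  br1 :: "'c1 \<Rightarrow> 'c1 \<Rightarrow> 'c1"
  sc0 :: "'k \<Rightarrow> 'c0 \<Rightarrow> 'c0"
  br0 :: "'c0 \<Rightarrow> 'c0 \<Rightarrow> 'c0"
  src :: "'c1 \<Rightarrow> 'c0"
  tgt :: "'c1 \<Rightarrow> 'c0"
  ide :: "'c0 \<Rightarrow> 'c1"
  cmp :: "'c1 \<Rightarrow> 'c1 \<Rightarrow> 'c1"
  tau :: "'c0 \<Rightarrow> 'c0 \<Rightarrow> 'c1"
  psi :: "'c0 \<Rightarrow> 'c0 \<Rightarrow> 'c1"

definition cat_leib :: "('k::field, 'c1::ab_group_add, 'c0::ab_group_add, 'z) bicat_scheme \<Rightarrow> bool" where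
  "cat_leib C \<longleftrightarrow>
     leibniz_alg (sc1 C) (br1 C) \<and> leibniz_alg (sc0 C) (br0 C) \<and>
     leibniz_hom (sc1 C) (br1 C) (sc0 C) (br0 C) (src C) \<and>
     leibniz_hom (sc1 C) (br1 C) (sc0 C) (br0 C) (tgt C) \<and>
     leibniz_hom (sc0 C) (br0 C) (sc1 C) (br1 C) (ide C) \<and>
     \<comment> \<open>k is a Leibniz homomorphism on the pullback {(x,y). t x = s y}\<close>
     (\<forall>x y x' y'. tgt C x = src C y \<longrightarrow> tgt C x' = src C y' \<longrightarrow>
        cmp C (x + x') (y + y') = cmp C x y + cmp C x' y' \<and>
        cmp C (br1 C x x') (br1 C y y') = br1 C (cmp C x y) (cmp C x' y')) \<and>
     (\<forall>c x y. tgt C x = src C y \<longrightarrow> cmp C (sc1 C c x) (sc1 C c y) = sc1 C c (cmp C x y)) \<and>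
     \<comment> \<open>internal category axioms\<close>
     (\<forall>a. src C (ide C a) = a \<and> tgt C (ide C a) = a) \<and>
     (\<forall>x y. tgt C x = src C y \<longrightarrow> src C (cmp C x y) = src C x \<and> tgt C (cmp C x y) = tgt C y) \<and>
     (\<forall>x. cmp C (ide C (src C x)) x = x \<and> cmp C x (ide C (tgt C x)) = x) \<and>
     (\<forall>x y z. tgt C x = src C y \<longrightarrow> tgt C y = src C z \<longrightarrow>
        cmp C (cmp C x y) z = cmp C x (cmp C y z))"

definition braided_cat :: "('k::field, 'c1::ab_group_add, 'c0::ab_group_add, 'z) bicat_scheme \<Rightarrow> bool" where
  "braided_cat C \<longleftrightarrow> cat_leib C \<and>
     bilinear_map (sc0 C) (sc0 C) (sc1 C) (tau C) \<and>
     bilinear_map (sc0 C) (sc0 C) (sc1 C) (psi C) \<and>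
     (\<forall>a b. src C (tau C a b) = br0 C a b \<and> src C (psi C a b) = br0 C a b \<and>
            tgt C (tau C a b) = - br0 C a b \<and> tgt C (psi C a b) = - br0 C a b) \<and>
     (\<forall>x y. cmp C (br1 C x y) (tau C (tgt C x) (tgt C y)) = cmp C (tau C (src C x) (src C y)) (- br1 C x y)) \<and>
     (\<forall>x y. cmp C (br1 C x y) (psi C (tgt C x) (tgt C y)) = cmp C (psi C (src C x) (src C y)) (- br1 C x y)) \<and>
     (\<forall>a b c. tau C a (br0 C b c) = tau C (br0 C a b) c - tau C (br0 C a c) b) \<and>
     (\<forall>a b c. psi C a (br0 C b c) = tau C (br0 C a b) c - psi C (br0 C a c) b) \<and>
     (\<forall>a b c. tau C a (br0 C b c) = tau C (br0 C a b) c - psi C (br0 C a c) b) \<and>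
     (\<forall>a b c. psi C a (br0 C b c) = psi C (br0 C a b) c - psi C (br0 C a c) b)"

definition braided_functor ::
  "('k::field, 'c1::ab_group_add, 'c0::ab_group_add, 'z) bicat_scheme
   \<Rightarrow> ('k, 'd1::ab_group_add, 'd0::ab_group_add, 'z2) bicat_scheme
   \<Rightarrow> ('c1 \<Rightarrow> 'd1) \<Rightarrow> ('c0 \<Rightarrow> 'd0) \<Rightarrow> bool" where
  "braided_functor C C' F1 F0 \<longleftrightarrow> braided_cat C \<and> braided_cat C' \<and>
     leibniz_hom (sc1 C) (br1 C) (sc1 C') (br1 C') F1 \<and>
     leibniz_hom (sc0 C) (br0 C) (sc0 C') (br0 C') F0 \<and>
     (\<forall>x. src C' (F1 x) = F0 (src C x) \<and> tgt C' (F1 x) = F0 (tgt C x)) \<and>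
     (\<forall>a. F1 (ide C a) = ide C' (F0 a)) \<and>
     (\<forall>x y. tgt C x = src C y \<longrightarrow> F1 (cmp C x y) = cmp C' (F1 x) (F1 y)) \<and>
     (\<forall>a b. F1 (tau C a b) = tau C' (F0 a) (F0 b) \<and> F1 (psi C a b) = psi C' (F0 a) (F0 b))"

definition CX :: "('k::field, 'm::ab_group_add, 'n::ab_group_add) bxm \<Rightarrow> ('k, 'm \<times> 'n, 'n) bicat" where
  "CX X = \<lparr>
     sc1 = (\<lambda>c (m, n). (scM X c m, scN X c n)),
     br1 = (\<lambda>(m, n) (m', n'). (brM X m m' + act1 X n m' + act2 X m n', brN X n n')),
     sc0 = scN X,
     br0 = brN X,
     src = (\<lambda>(m, n). n),
     tgt = (\<lambda>(m, n). bd X m + n),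
     ide = (\<lambda>n. (0, n)),
     cmp = (\<lambda>(m, n) (m', n'). (m + m', n)),
     tau = (\<lambda>n n'. (scM X (-2) (curly X n n'), brN X n n')),
     psi = (\<lambda>n n'. (scM X (-2) (angle X n n'), brN X n n')) \<rparr>"

end

theory Submission
  imports Defs
begin

(* Everything is a computation in the semidirect product M \<rtimes> N.  Its Leibniz identity unfolds to
   the action axioms; composition k preserves brackets of composable pairs precisely because of
   the Peiffer identities \<partial>m \<cdot>1 m' = [m,m'] = m \<cdot>2 \<partial>m'; naturality of \<tau> and \<psi> comes from
   {\<partial>m,n} = m \<cdot>2 n and {n,\<partial>m} = n \<cdot>1 m; and the four identities for \<tau> and \<psi> are those of
   the braiding scaled by -2.  No step divides by 2. *)

lemmas linear_map_simps =
  module_hom.add[OF module_hom_linearI] module_hom.scale[OF module_hom_linearI]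
  module_hom.zero[OF module_hom_linearI] module_hom.neg[OF module_hom_linearI]
  module_hom.diff[OF module_hom_linearI]

lemma bilinear_map_linearD:
  assumes "bilinear_map sa sb sc f"
  shows "Vector_Spaces.linear sa sc (\<lambda>x. f x y)" and "Vector_Spaces.linear sb sc (f x)"
  using assms unfolding bilinear_map_def by blast+

lemmas bilinear_map_simps =
  linear_map_simps[OF bilinear_map_linearD(1)] linear_map_simps[OF bilinear_map_linearD(2)]

lemma vector_space_scale_minus_two:
  assumes "vector_space s"
  shows "s (-2) x = - (x + x)"
proof -
  interpret vector_space s by (fact assms)
  have "s (1 + 1) x = x + x" by (simp only: scale_left_distrib scale_one)
  then show ?thesis by simp
qed

lemmas vector_space_scale_simps =
  module.scale_zero_right[OF module_iff_vector_space[THEN iffD2]]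
  module.scale_minus_right[OF module_iff_vector_space[THEN iffD2]]
  module.scale_right_distrib[OF module_iff_vector_space[THEN iffD2]]
  module.scale_right_diff_distrib[OF module_iff_vector_space[THEN iffD2]]
  vector_space_scale_minus_two

lemma leibniz_algD:
  assumes "leibniz_alg s br"
  shows "vector_space s" and "bilinear_map s s s br"
    and "br x (br y z) = br (br x y) z - br (br x z) y"
  using assms unfolding leibniz_alg_def by blast+

lemma leibniz_homD:
  assumes "leibniz_hom sa bra sb brb f"
  shows "leibniz_alg sa bra" and "leibniz_alg sb brb" and "Vector_Spaces.linear sa sb f"
    and "f (bra x y) = brb (f x) (f y)"
  using assms unfolding leibniz_hom_def by blast+

lemma leib_actionD:
  assumes "leib_action X"
  shows "leibniz_alg (scM X) (brM X)" and "leibniz_alg (scN X) (brN X)"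
    and "bilinear_map (scN X) (scM X) (scM X) (act1 X)"
    and "bilinear_map (scM X) (scN X) (scM X) (act2 X)"
    and "act1 X n (brM X m m') = brM X (act1 X n m) m' - brM X (act1 X n m') m"
    and "brM X m (act1 X n m') = brM X (act2 X m n) m' - act2 X (brM X m m') n"
    and "brM X m (act2 X m' n) = act2 X (brM X m m') n - brM X (act2 X m n) m'"
    and "act2 X m (brN X n n') = act2 X (act2 X m n) n' - act2 X (act2 X m n') n"
    and "act1 X n (act2 X m n') = act2 X (act1 X n m) n' - act1 X (brN X n n') m"
    and "act1 X n (act1 X n' m) = act1 X (brN X n n') m - act2 X (act1 X n m) n'"
  using assms unfolding leib_action_def by blast+

lemma crossed_moduleD:
  assumes "crossed_module X"
  shows "leib_action X" and "leibniz_hom (scM X) (brM X) (scN X) (brN X) (bd X)"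
    and "bd X (act1 X n m) = brN X n (bd X m)" and "bd X (act2 X m n) = brN X (bd X m) n"
    and "act1 X (bd X m) m' = brM X m m'" and "act2 X m (bd X m') = brM X m m'"
  using assms unfolding crossed_module_def by metis+

lemma braided_xmodD:
  assumes "braided_xmod X"
  shows "crossed_module X"
    and "bilinear_map (scN X) (scN X) (scM X) (curly X)"
    and "bilinear_map (scN X) (scN X) (scM X) (angle X)"
    and "bd X (curly X n n') = brN X n n'" and "bd X (angle X n n') = brN X n n'"
    and "curly X (bd X m) n = act2 X m n" and "curly X n (bd X m) = act1 X n m"
    and "angle X (bd X m) n = act2 X m n" and "angle X n (bd X m) = act1 X n m"
    and "curly X n (brN X n' n'') = curly X (brN X n n') n'' - curly X (brN X n n'') n'"
    and "angle X n (brN X n' n'') = curly X (brN X n n') n'' - angle X (brN X n n'') n'"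
    and "curly X n (brN X n' n'') = curly X (brN X n n') n'' - angle X (brN X n n'') n'"
    and "angle X n (brN X n' n'') = angle X (brN X n n') n'' - angle X (brN X n n'') n'"
  using assms unfolding braided_xmod_def by metis+

lemma bxm_homD:
  assumes "bxm_hom X X' f1 f2"
  shows "braided_xmod X" and "braided_xmod X'"
    and "leibniz_hom (scM X) (brM X) (scM X') (brM X') f1"
    and "leibniz_hom (scN X) (brN X) (scN X') (brN X') f2"
    and "f1 (act1 X n m) = act1 X' (f2 n) (f1 m)" and "f1 (act2 X m n) = act2 X' (f1 m) (f2 n)"
    and "bd X' (f1 m) = f2 (bd X m)"
    and "f1 (curly X n n') = curly X' (f2 n) (f2 n')"
    and "f1 (angle X n n') = angle X' (f2 n) (f2 n')"
  using assms unfolding bxm_hom_def by blast+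

lemma CX_simps:
  "sc1 (CX X) c x = (scM X c (fst x), scN X c (snd x))"
  "br1 (CX X) x y =
     (brM X (fst x) (fst y) + act1 X (snd x) (fst y) + act2 X (fst x) (snd y), brN X (snd x) (snd y))"
  "sc0 (CX X) = scN X" "br0 (CX X) = brN X"
  "src (CX X) x = snd x" "tgt (CX X) x = bd X (fst x) + snd x"
  "ide (CX X) n = (0, n)" "cmp (CX X) x y = (fst x + fst y, snd x)"
  "tau (CX X) a b = (scM X (-2) (curly X a b), brN X a b)"
  "psi (CX X) a b = (scM X (-2) (angle X a b), brN X a b)"
  by (simp_all add: CX_def split_def)

lemma vector_space_CX:
  assumes "vector_space (scM X)" and "vector_space (scN X)"
  shows "vector_space (sc1 (CX X))"
  using assms unfolding vector_space_def by (simp add: CX_simps prod_eq_iff)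

lemma leibniz_alg_CX:
  assumes "leib_action X"
  shows "leibniz_alg (sc1 (CX X)) (br1 (CX X))"
proof -
  note A = leib_actionD[OF assms]
  note M = leibniz_algD[OF A(1)] and N = leibniz_algD[OF A(2)]
  note simps = bilinear_map_simps[OF M(2)] bilinear_map_simps[OF N(2)]
    bilinear_map_simps[OF A(3)] bilinear_map_simps[OF A(4)]
    vector_space_scale_simps[OF M(1)] vector_space_scale_simps[OF N(1)]
  have V: "vector_space (sc1 (CX X))" using M(1) N(1) by (rule vector_space_CX)
  have bilinear: "bilinear_map (sc1 (CX X)) (sc1 (CX X)) (sc1 (CX X)) (br1 (CX X))"
    unfolding bilinear_map_def Vector_Spaces.linear_iff
    by (auto simp: V CX_simps prod_eq_iff simps algebra_simps)
  have jacobi: "br1 (CX X) x (br1 (CX X) y z) =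
      br1 (CX X) (br1 (CX X) x y) z - br1 (CX X) (br1 (CX X) x z) y" for x y z
    by (simp add: CX_simps prod_eq_iff simps M(3) N(3) A(5-10) algebra_simps)
  show ?thesis unfolding leibniz_alg_def by (intro conjI allI V bilinear jacobi)
qed

lemma cat_leib_CX:
  assumes "crossed_module X"
  shows "cat_leib (CX X)"
proof -
  note XM = crossed_moduleD[OF assms]
  note A = leib_actionD[OF XM(1)]
  note M = leibniz_algD[OF A(1)] and N = leibniz_algD[OF A(2)]
  note bd = leibniz_homD[OF XM(2)]
  note simps = bilinear_map_simps[OF M(2)] bilinear_map_simps[OF N(2)]
    bilinear_map_simps[OF A(3)] bilinear_map_simps[OF A(4)]
    vector_space_scale_simps[OF M(1)] vector_space_scale_simps[OF N(1)] linear_map_simps[OF bd(3)]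
  have L: "leibniz_alg (sc1 (CX X)) (br1 (CX X))" using XM(1) by (rule leibniz_alg_CX)
  have V: "vector_space (sc1 (CX X))" using L by (rule leibniz_algD)
  have src_hom: "leibniz_hom (sc1 (CX X)) (br1 (CX X)) (scN X) (brN X) (src (CX X))"
    unfolding leibniz_hom_def Vector_Spaces.linear_iff
    by (simp add: L A(2) V N(1) CX_simps)
  have tgt_hom: "leibniz_hom (sc1 (CX X)) (br1 (CX X)) (scN X) (brN X) (tgt (CX X))"
    unfolding leibniz_hom_def Vector_Spaces.linear_iff
    by (simp add: L A(2) V N(1) CX_simps simps bd(4) XM(3,4) algebra_simps)
  have ide_hom: "leibniz_hom (scN X) (brN X) (sc1 (CX X)) (br1 (CX X)) (ide (CX X))"
    unfolding leibniz_hom_def Vector_Spaces.linear_iff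
    by (simp add: L A(2) V N(1) CX_simps simps)
  have cmp_bracket:
    "cmp (CX X) (br1 (CX X) x x') (br1 (CX X) y y') = br1 (CX X) (cmp (CX X) x y) (cmp (CX X) x' y')"
    if "tgt (CX X) x = src (CX X) y" and "tgt (CX X) x' = src (CX X) y'" for x y x' y'
  proof -
    obtain m n m' n' where "x = (m, n)" and "x' = (m', n')" by fastforce
    moreover have "snd y = bd X m + n" and "snd y' = bd X m' + n'"
      using that calculation by (simp_all add: CX_simps)
    ultimately show ?thesis by (simp add: CX_simps simps XM(5,6) algebra_simps)
  qed
  show ?thesis
    unfolding cat_leib_def CX_simps(3,4)
    using L A(2) src_hom tgt_hom ide_hom cmp_bracket
    by (simp add: CX_simps simps algebra_simps)
qed

lemma braided_cat_CX:
  assumes "braided_xmod X"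
  shows "braided_cat (CX X)"
proof -
  note B = braided_xmodD[OF assms]
  note XM = crossed_moduleD[OF B(1)]
  note A = leib_actionD[OF XM(1)]
  note M = leibniz_algD[OF A(1)] and N = leibniz_algD[OF A(2)]
  note bd = leibniz_homD[OF XM(2)]
  note simps = bilinear_map_simps[OF M(2)] bilinear_map_simps[OF A(3)] bilinear_map_simps[OF A(4)]
    bilinear_map_simps[OF B(2)] bilinear_map_simps[OF B(3)]
    vector_space_scale_simps[OF M(1)] linear_map_simps[OF bd(3)]
  have V: "vector_space (sc1 (CX X))" using M(1) N(1) by (rule vector_space_CX)
  have bilinear: "bilinear_map (scN X) (scN X) (sc1 (CX X)) (tau (CX X))"
    "bilinear_map (scN X) (scN X) (sc1 (CX X)) (psi (CX X))"
    unfolding bilinear_map_def Vector_Spaces.linear_iff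
    by (simp_all add: V N(1) CX_simps simps bilinear_map_simps[OF N(2)])
  have src_tgt: "src (CX X) (tau (CX X) a b) = brN X a b" "src (CX X) (psi (CX X) a b) = brN X a b"
    "tgt (CX X) (tau (CX X) a b) = - brN X a b" "tgt (CX X) (psi (CX X) a b) = - brN X a b" for a b
    by (simp_all add: CX_simps simps B(4,5))
  have natural:
    "cmp (CX X) (br1 (CX X) x y) (tau (CX X) (tgt (CX X) x) (tgt (CX X) y)) =
      cmp (CX X) (tau (CX X) (src (CX X) x) (src (CX X) y)) (- br1 (CX X) x y)"
    "cmp (CX X) (br1 (CX X) x y) (psi (CX X) (tgt (CX X) x) (tgt (CX X) y)) =
      cmp (CX X) (psi (CX X) (src (CX X) x) (src (CX X) y)) (- br1 (CX X) x y)" for x y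
    by (simp_all add: CX_simps simps B(6-9) XM(5) algebra_simps)
  have hexagon:
    "tau (CX X) a (brN X b c) = tau (CX X) (brN X a b) c - tau (CX X) (brN X a c) b"
    "psi (CX X) a (brN X b c) = tau (CX X) (brN X a b) c - psi (CX X) (brN X a c) b"
    "tau (CX X) a (brN X b c) = tau (CX X) (brN X a b) c - psi (CX X) (brN X a c) b"
    "psi (CX X) a (brN X b c) = psi (CX X) (brN X a b) c - psi (CX X) (brN X a c) b" for a b c
    by (simp add: CX_simps N(3) simps B(10), simp add: CX_simps N(3) simps B(11),
        simp add: CX_simps N(3) simps B(12), simp add: CX_simps N(3) simps B(13))
  show ?thesis
    unfolding braided_cat_def CX_simps(3,4)
    by (intro conjI allI cat_leib_CX[OF B(1)] bilinear src_tgt natural hexagon)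
qed

lemma braided_functor_CX:
  assumes "bxm_hom X X' f1 f2"
  shows "braided_functor (CX X) (CX X') (map_prod f1 f2) f2"
proof -
  note H = bxm_homD[OF assms]
  note F1 = leibniz_homD[OF H(3)] and F2 = leibniz_homD[OF H(4)]
  note simps = linear_map_simps[OF F1(3)] linear_map_simps[OF F2(3)]
  note C = braided_cat_CX[OF H(1)] braided_cat_CX[OF H(2)]
  then have L: "leibniz_alg (sc1 (CX X)) (br1 (CX X))" "leibniz_alg (sc1 (CX X')) (br1 (CX X'))"
    unfolding braided_cat_def cat_leib_def by blast+
  note V = leibniz_algD(1)[OF L(1)] leibniz_algD(1)[OF L(2)]
  have "leibniz_hom (sc1 (CX X)) (br1 (CX X)) (sc1 (CX X')) (br1 (CX X')) (map_prod f1 f2)"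
    unfolding leibniz_hom_def Vector_Spaces.linear_iff
    by (simp add: L V CX_simps simps F1(4) F2(4) H(5,6))
  then show ?thesis
    unfolding braided_functor_def CX_simps(3,4)
    using C H(4) by (simp add: CX_simps simps F2(4) H(7-9))
qed

theorem mainTheorem3:
  assumes "(2::'k::field) \<noteq> 0"
  shows "(\<forall>X :: ('k, 'm::ab_group_add, 'n::ab_group_add) bxm.
            braided_xmod X \<longrightarrow> braided_cat (CX X))
       \<and> (\<forall>(X :: ('k, 'm, 'n) bxm) (X' :: ('k, 'm2::ab_group_add, 'n2::ab_group_add) bxm) f1 f2.
            bxm_hom X X' f1 f2 \<longrightarrow> braided_functor (CX X) (CX X') (map_prod f1 f2) f2)
       \<and> map_prod (id :: 'm \<Rightarrow> 'm) (id :: 'n \<Rightarrow> 'n) = id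
       \<and> (\<forall>(f1 :: 'm \<Rightarrow> 'm2) (f2 :: 'n \<Rightarrow> 'n2) (g1 :: 'm2 \<Rightarrow> 'm3) (g2 :: 'n2 \<Rightarrow> 'n3).
            map_prod (g1 \<circ> f1) (g2 \<circ> f2) = map_prod g1 g2 \<circ> map_prod f1 f2)"
  using braided_cat_CX braided_functor_CX map_prod.id map_prod.comp
  by auto

end
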